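(* Let $\mathbb{K}$ be any field and let $1\le k\le m$ be integers. Then $$\mathcal{S}(k)+\mathcal{S}(m)\supseteq\Big\{\alpha=\sum_{n}\alpha_n t^{-n}\in\mathbb{K}((t^{-1})) : \alpha_n=0 \text{ for every integer } 1\le n<\max\{k,\tfrac{m-1}{2}\}\Big\}.$$
   Context: $\mathbb{K}((t^{-1}))$ is the field of formal Laurent series $\alpha=\sum_{n=-\infty}^{\infty}\alpha_n t^{-n}$ over the field $\mathbb{K}$ (only finitely many nonzero $\alpha_n$ with $n<0$), with $\deg\alpha=\sup\{-n:\alpha_n\ne0\}$. Every $\alpha$ has a unique continued fraction expansion $[a_0;a_1,a_2,\dots]$ with $a_n\in\mathbb{K}[t]$, $\deg a_n\ge1$ for $n\ge1$, finite iff $\alpha\in\mathbb{K}(t)$. $a_n(\alpha)$ denotes the $n$-th partial quotient (when defined) and $d_n(\alpha)=\deg a_n(\alpha)$. For $k\ge1$, $\mathcal{S}(k)=\{\alpha\in\mathbb{K}((t^{-1})): d_n(\alpha)\ge k \text{ for every } n\ge1 \text{ for which } a_n(\alpha)\text{ is defined}\}$. *)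

theory Defs
  imports "HOL-Computational_Algebra.Formal_Laurent_Series"
begin

(* K((t^{-1})) is modelled as 'a fls with the series variable X = t^{-1}:
   alpha = sum_n alpha_n t^{-n}  corresponds to  fls_nth alpha n = alpha_n.
   Polynomials in t are the series with alpha_n = 0 for n > 0. *)

definition cf_frac :: "'a::field fls \<Rightarrow> 'a fls" where
  "cf_frac f = fps_to_fls (fls_regpart f) - fls_const (fls_nth f 0)"

(* integer (polynomial) part as a polynomial in t: coefficient of t^j is f_{-j} *)
definition cf_intpart :: "'a::field fls \<Rightarrow> 'a poly" where
  "cf_intpart f = fls_prpart f + [: fls_nth f 0 :]"

primrec cf_tail :: "'a::field fls \<Rightarrow> nat \<Rightarrow> 'a fls" where
  "cf_tail f 0 = f"
| "cf_tail f (Suc n) = inverse (cf_frac (cf_tail f n))"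

definition cf_defined :: "'a::field fls \<Rightarrow> nat \<Rightarrow> bool" where
  "cf_defined f n = (\<forall>j<n. cf_frac (cf_tail f j) \<noteq> 0)"

definition cf_pq :: "'a::field fls \<Rightarrow> nat \<Rightarrow> 'a poly" where
  "cf_pq f n = cf_intpart (cf_tail f n)"

definition cfS :: "nat \<Rightarrow> 'a::field fls set" where
  "cfS k = {f. \<forall>n\<ge>1. cf_defined f n \<longrightarrow> k \<le> degree (cf_pq f n)}"

end

theory Submission
  imports Defs "HOL-Library.Sublist"
begin

(* Valuations are taken in X = t^{-1}, so val = - deg. Split alpha = P + a with P in K[t] and
   deg a < 0. It suffices to write a = beta + gamma such that the orbits of beta and gamma under
   the Gauss map u |-> frac (1/u) stay in valuation >= k, resp. >= m: these valuations are the
   degrees of the partial quotients.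

   The series whose expansion begins with b_1, ..., b_n, followed by a partial quotient of
   degree >= k, include the ball val (e - [0; b_1, ..., b_n]) >= 2 (deg b_1 + ... + deg b_n) + k
   (a cylinder). Build beta and gamma greedily: extend the expansion whose cylinder has the
   smaller radius by the next partial quotient of a minus the other continued fraction. The
   hypothesis on alpha gives the initial slack that keeps the error a - beta_n - gamma_n inside
   both cylinders, and every step preserves it. Either the error vanishes after finitely many
   steps, or both expansions grow forever and converge to the required beta and gamma. *)

definition val_ge :: "'a::zero fls \<Rightarrow> int \<Rightarrow> bool" where
  "val_ge f r \<longleftrightarrow> (\<forall>j<r. fls_nth f j = 0)"

lemma val_ge_iff: "val_ge f r \<longleftrightarrow> f = 0 \<or> r \<le> fls_subdegree f"
  unfolding val_ge_def
  by (metis fls_subdegree_geI fls_subdegree_leI linorder_not_less fls_zero_nth order_less_le_trans)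

lemma val_ge_0 [simp]: "val_ge 0 r"
  by (simp add: val_ge_def)

lemma val_ge_mono: "val_ge f r \<Longrightarrow> s \<le> r \<Longrightarrow> val_ge f s"
  by (simp add: val_ge_def)

lemma val_ge_add: "val_ge f r \<Longrightarrow> val_ge g r \<Longrightarrow> val_ge (f + g) r"
  by (simp add: val_ge_def)

lemma val_ge_diff: "val_ge f r \<Longrightarrow> val_ge g r \<Longrightarrow> val_ge (f - g) r"
  by (simp add: val_ge_def)

lemma eq_0_if_val_ge_all: "(\<And>r. val_ge f r) \<Longrightarrow> f = 0"
  by (metis val_ge_iff less_add_one not_le)

lemma fls_subdegree_add_val_ge:
  assumes "f \<noteq> 0" "val_ge g (fls_subdegree f + 1)"
  shows "f + g \<noteq> 0" "fls_subdegree (f + g) = fls_subdegree f"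
proof -
  have nz: "fls_nth (f + g) (fls_subdegree f) \<noteq> 0"
    using assms by (simp add: val_ge_def)
  then show "f + g \<noteq> 0"
    by (metis fls_zero_nth)
  show "fls_subdegree (f + g) = fls_subdegree f"
    using nz assms by (intro fls_subdegree_eqI) (auto simp: val_ge_def)
qed

lemma fls_subdegree_inverse_diff:
  fixes u v :: "'a::field fls"
  assumes "u \<noteq> 0" "v \<noteq> 0" "u \<noteq> v"
  shows "inverse u - inverse v \<noteq> 0"
    and "fls_subdegree (inverse u - inverse v) =
      fls_subdegree (u - v) - fls_subdegree u - fls_subdegree v"
proof -
  have eq: "inverse u - inverse v = (v - u) * (inverse u * inverse v)"
    using assms by (simp add: field_simps)
  show "inverse u - inverse v \<noteq> 0"
    using assms by simp
  show "fls_subdegree (inverse u - inverse v) =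
      fls_subdegree (u - v) - fls_subdegree u - fls_subdegree v"
    unfolding eq using assms by (simp add: fls_subdegree_minus_sym)
qed

lemma cf_frac_nth: "fls_nth (cf_frac f) j = (if 1 \<le> j then fls_nth f j else 0)"
  by (simp add: cf_frac_def)

lemma val_ge_cf_frac: "val_ge (cf_frac f) 1"
  by (simp add: val_ge_def cf_frac_nth)

definition is_poly :: "'a::zero fls \<Rightarrow> bool" where
  "is_poly b \<longleftrightarrow> (\<forall>j>0. fls_nth b j = 0)"

lemma is_poly_diff_cf_frac: "is_poly (f - cf_frac f)"
  by (simp add: is_poly_def cf_frac_nth)

lemma cf_frac_poly_add: "is_poly b \<Longrightarrow> val_ge x 1 \<Longrightarrow> cf_frac (b + x) = x"
  by (intro fls_eqI) (auto simp: cf_frac_nth val_ge_def is_poly_def)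

definition poly_deg_ge :: "int \<Rightarrow> 'a::field fls \<Rightarrow> bool" where
  "poly_deg_ge k b \<longleftrightarrow> is_poly b \<and> b \<noteq> 0 \<and> fls_subdegree b \<le> - k"

lemma poly_deg_ge_mono: "poly_deg_ge k b \<Longrightarrow> l \<le> k \<Longrightarrow> poly_deg_ge l b"
  by (auto simp: poly_deg_ge_def)

lemma list_all_poly_deg_ge_mono:
  "list_all (poly_deg_ge k) as \<Longrightarrow> l \<le> k \<Longrightarrow> list_all (poly_deg_ge l) as"
  by (auto elim: list.pred_mono_strong intro: poly_deg_ge_mono)

lemma fls_subdegree_poly_add_frac:
  assumes "poly_deg_ge 1 b" "val_ge x 1"
  shows "b + x \<noteq> 0" "fls_subdegree (b + x) = fls_subdegree b"
  using fls_subdegree_add_val_ge[of b x] assms val_ge_mono[OF assms(2)]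
  by (auto simp: poly_deg_ge_def)

lemma fls_subdegree_inverse_poly_add_diff:
  assumes "poly_deg_ge 1 b" "val_ge x 1" "val_ge y 1" "x \<noteq> y"
  shows "inverse (b + x) - inverse (b + y) \<noteq> 0"
    and "fls_subdegree (inverse (b + x) - inverse (b + y)) =
      fls_subdegree (x - y) - 2 * fls_subdegree b"
  using fls_subdegree_inverse_diff[of "b + x" "b + y"] fls_subdegree_poly_add_frac[OF assms(1)]
    assms(2-4)
  by auto

lemma val_ge_inverse_poly_add_diff:
  assumes "poly_deg_ge 1 b" "val_ge x 1" "val_ge y 1"
  shows "val_ge (inverse (b + x) - inverse (b + y)) (r - 2 * fls_subdegree b) \<longleftrightarrow> val_ge (x - y) r"
  using fls_subdegree_inverse_poly_add_diff[OF assms] by (cases "x = y") (auto simp: val_ge_iff)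

definition gauss :: "'a::field fls \<Rightarrow> 'a fls" where
  "gauss u = cf_frac (inverse u)"

lemma gauss_0 [simp]: "gauss 0 = 0"
  by (intro fls_eqI) (simp add: gauss_def cf_frac_nth)

lemma val_ge_gauss: "val_ge (gauss u) 1"
  by (simp add: gauss_def val_ge_cf_frac)

lemma inverse_eq_add_gauss_if_near:
  assumes b: "poly_deg_ge 1 b" and x: "val_ge x 1"
    and near: "val_ge (e - inverse (b + x)) (1 - 2 * fls_subdegree b)"
  shows "inverse e = b + gauss e"
proof -
  define c where "c = inverse (b + x)"
  have c0: "c \<noteq> 0" and sdc: "fls_subdegree c = - fls_subdegree b"
    using fls_subdegree_poly_add_frac[OF b x] by (auto simp: c_def)
  have "fls_subdegree b \<le> -1" using b by (simp add: poly_deg_ge_def)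
  then have "val_ge (e - c) (fls_subdegree c + 1)"
    using near sdc by (auto simp: c_def intro: val_ge_mono)
  from fls_subdegree_add_val_ge[OF c0 this]
  have e0: "e \<noteq> 0" and sde: "fls_subdegree e = fls_subdegree c"
    by simp_all
  have "val_ge (inverse e - inverse c) 1"
  proof (cases "e = c")
    case False
    then show ?thesis
      using fls_subdegree_inverse_diff[OF e0 c0] near sde sdc by (simp add: val_ge_iff c_def)
  qed simp
  then have "val_ge (x + (inverse e - inverse c)) 1"
    using x val_ge_add by blast
  moreover have ie: "inverse e = b + (x + (inverse e - inverse c))"
    by (simp add: c_def)
  ultimately have "gauss e = x + (inverse e - inverse c)"
    using b unfolding gauss_def poly_deg_ge_def by (metis cf_frac_poly_add)
  with ie show ?thesis
    by simp
qed

primrec cf_eval :: "'a::field fls list \<Rightarrow> 'a fls" where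
  "cf_eval [] = 0"
| "cf_eval (b # bs) = inverse (b + cf_eval bs)"

(* the degree of the denominator of [0; b_1, ..., b_n] *)
definition deg_sum :: "'a::field fls list \<Rightarrow> int" where
  "deg_sum as = (\<Sum>b\<leftarrow>as. - fls_subdegree b)"

definition cyl_radius :: "int \<Rightarrow> 'a::field fls list \<Rightarrow> int" where
  "cyl_radius k as = 2 * deg_sum as + k"

lemma deg_sum_Nil [simp]: "deg_sum [] = 0"
  and deg_sum_Cons [simp]: "deg_sum (b # bs) = - fls_subdegree b + deg_sum bs"
  and deg_sum_append [simp]: "deg_sum (as @ bs) = deg_sum as + deg_sum bs"
  by (simp_all add: deg_sum_def)

lemma deg_sum_ge: "list_all (poly_deg_ge k) as \<Longrightarrow> k * int (length as) \<le> deg_sum as"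
  by (induction as) (auto simp: poly_deg_ge_def algebra_simps)

lemma val_ge_cf_eval: "list_all (poly_deg_ge k) as \<Longrightarrow> 1 \<le> k \<Longrightarrow> val_ge (cf_eval as) k"
proof (induction as)
  case (Cons b bs)
  then have b: "poly_deg_ge 1 b" and "val_ge (cf_eval bs) 1"
    by (auto intro: poly_deg_ge_mono val_ge_mono)
  with Cons.prems show ?case
    using fls_subdegree_poly_add_frac[OF b] by (auto simp: val_ge_iff poly_deg_ge_def)
qed simp

lemma gauss_cf_eval_Cons:
  "list_all (poly_deg_ge 1) (b # bs) \<Longrightarrow> gauss (cf_eval (b # bs)) = cf_eval bs"
  using val_ge_cf_eval[of 1 bs] by (simp add: gauss_def poly_deg_ge_def cf_frac_poly_add)

lemma gauss_funpow_0 [simp]: "(gauss ^^ j) 0 = 0"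
  by (induction j) simp_all

(* For deg u < 0: every partial quotient of u has degree at least k. *)
definition gauss_orbit_ge :: "int \<Rightarrow> 'a::field fls \<Rightarrow> bool" where
  "gauss_orbit_ge k u \<longleftrightarrow> (\<forall>j. val_ge ((gauss ^^ j) u) k)"

lemma gauss_orbit_ge_cf_eval:
  assumes "list_all (poly_deg_ge k) as" "1 \<le> k"
  shows "gauss_orbit_ge k (cf_eval as)"
  unfolding gauss_orbit_ge_def
proof
  fix j
  show "val_ge ((gauss ^^ j) (cf_eval as)) k"
    using assms
  proof (induction as arbitrary: j)
    case Nil
    then show ?case by simp
  next
    case (Cons b bs)
    then have "list_all (poly_deg_ge 1) (b # bs)"
      by (blast intro: list_all_poly_deg_ge_mono)
    with Cons show ?case
      by (cases j) (simp_all add: val_ge_cf_eval gauss_cf_eval_Cons funpow_Suc_right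
          del: funpow.simps cf_eval.simps)
  qed
qed

lemma inverse_add_gauss_if_near_cf_eval_Cons:
  assumes "list_all (poly_deg_ge 1) (b # bs)"
    and "val_ge (e - cf_eval (b # bs)) (1 - 2 * fls_subdegree b)"
  shows "inverse (b + gauss e) = e"
proof -
  have "inverse e = b + gauss e"
    using assms val_ge_cf_eval[of 1 bs] by (intro inverse_eq_add_gauss_if_near) simp_all
  then show ?thesis
    by (metis inverse_inverse_eq)
qed

lemma val_ge_cf_eval_append:
  assumes "list_all (poly_deg_ge k) (as @ bs)" "1 \<le> k"
  shows "val_ge (cf_eval (as @ bs) - cf_eval as) (cyl_radius k as)"
  using assms
proof (induction as)
  case Nil
  then show ?case by (simp add: cyl_radius_def val_ge_cf_eval)
next
  case (Cons a as)
  have "list_all (poly_deg_ge 1) ((a # as) @ bs)"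
    using Cons.prems(1,2) by (rule list_all_poly_deg_ge_mono)
  then have a: "poly_deg_ge 1 a" and "list_all (poly_deg_ge 1) (as @ bs)"
    by simp_all
  then have "val_ge (cf_eval (as @ bs)) 1" "val_ge (cf_eval as) 1"
    using val_ge_cf_eval[of 1 "as @ bs"] val_ge_cf_eval[of 1 as] by simp_all
  with Cons show ?case
    using val_ge_inverse_poly_add_diff[OF a, of "cf_eval (as @ bs)" "cf_eval as" "cyl_radius k as"]
    by (simp add: cyl_radius_def algebra_simps)
qed

lemma cylinder_gauss_iterate:
  assumes "list_all (poly_deg_ge k) as" "1 \<le> k"
    and "val_ge (e - cf_eval as) (cyl_radius k as)" "j \<le> length as"
  shows "val_ge ((gauss ^^ j) e) k"
  using assms
proof (induction as arbitrary: e j)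
  case Nil
  then show ?case by (simp add: cyl_radius_def)
next
  case (Cons b bs)
  have bs1: "list_all (poly_deg_ge 1) (b # bs)"
    using Cons.prems(1,2) by (rule list_all_poly_deg_ge_mono)
  have r: "cyl_radius k (b # bs) = cyl_radius k bs - 2 * fls_subdegree b"
    by (simp add: cyl_radius_def)
  have "0 \<le> deg_sum bs" "0 \<le> deg_sum (b # bs)"
    using deg_sum_ge[of 1 bs] deg_sum_ge[of 1 "b # bs"] bs1 by simp_all
  then have "1 - 2 * fls_subdegree b \<le> cyl_radius k (b # bs)" "k \<le> cyl_radius k (b # bs)"
    using Cons.prems(2) by (simp_all add: cyl_radius_def)
  then have near: "val_ge (e - cf_eval (b # bs)) (1 - 2 * fls_subdegree b)"
    and near_k: "val_ge (e - cf_eval (b # bs)) k"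
    using Cons.prems(3) val_ge_mono by blast+
  show ?case
  proof (cases j)
    case 0
    have "val_ge (cf_eval (b # bs) + (e - cf_eval (b # bs))) k"
      using val_ge_cf_eval[OF Cons.prems(1,2)] near_k by (rule val_ge_add)
    then show ?thesis
      using 0 by simp
  next
    case (Suc j')
    have "val_ge (e - cf_eval (b # bs)) (cyl_radius k bs - 2 * fls_subdegree b)"
      using Cons.prems(3) r by simp
    then have "val_ge (gauss e - cf_eval bs) (cyl_radius k bs)"
      using val_ge_inverse_poly_add_diff[OF _ val_ge_gauss, of b "cf_eval bs" e "cyl_radius k bs"]
        val_ge_cf_eval[of 1 bs] bs1
      by (simp add: inverse_add_gauss_if_near_cf_eval_Cons[OF bs1 near])
    then have "val_ge ((gauss ^^ j') (gauss e)) k"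
      using Cons Suc by simp
    then show ?thesis
      using Suc by (simp add: funpow_Suc_right del: funpow.simps)
  qed
qed

lemma cylinder_next_pquot:
  assumes "list_all (poly_deg_ge 1) as" "e \<noteq> cf_eval as"
    and "val_ge (e - cf_eval as) (cyl_radius 1 as)"
  shows "\<exists>a. poly_deg_ge 1 a \<and> - fls_subdegree a = fls_subdegree (e - cf_eval as) - 2 * deg_sum as \<and>
    val_ge (e - cf_eval (as @ [a])) (cyl_radius 1 (as @ [a]))"
  using assms unfolding cyl_radius_def
proof (induction as arbitrary: e)
  case Nil
  then have e0: "e \<noteq> 0" and sde: "0 < fls_subdegree e"
    by (auto simp: val_ge_iff)
  define a where "a = inverse e - gauss e"
  have a_nth: "fls_nth a j = (if j < 1 then fls_nth (inverse e) j else 0)" for j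
    by (simp add: a_def gauss_def cf_frac_nth)
  have nz: "fls_nth a (- fls_subdegree e) \<noteq> 0"
    using nth_fls_subdegree_nonzero[of "inverse e"] e0 sde by (simp add: a_nth)
  then have sda: "fls_subdegree a = - fls_subdegree e"
    by (rule fls_subdegree_eqI) (simp add: a_nth)
  have a: "poly_deg_ge 1 a"
    using nz sda sde by (auto simp: poly_deg_ge_def is_poly_def a_nth)
  have "inverse (a + gauss e) = e"
    by (simp add: a_def)
  then have "val_ge (e - cf_eval [a]) (1 - 2 * fls_subdegree a)"
    using val_ge_inverse_poly_add_diff[OF a val_ge_gauss, of 0 e 1] val_ge_gauss by simp
  with a sda show ?case
    by (intro exI[of _ a]) (simp add: algebra_simps)
next
  case (Cons b bs)
  have b: "poly_deg_ge 1 b" and bs: "list_all (poly_deg_ge 1) bs" "val_ge (cf_eval bs) 1"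
    using Cons.prems(1) val_ge_cf_eval[of 1 bs] by simp_all
  have "0 \<le> deg_sum bs"
    using deg_sum_ge[OF bs(1)] by simp
  then have "val_ge (e - cf_eval (b # bs)) (1 - 2 * fls_subdegree b)"
    using Cons.prems(3) by (auto intro: val_ge_mono)
  then have e: "inverse (b + gauss e) = e"
    by (rule inverse_add_gauss_if_near_cf_eval_Cons[OF Cons.prems(1)])
  have ne: "gauss e \<noteq> cf_eval bs"
    using Cons.prems(2) e by auto
  have sd: "fls_subdegree (e - cf_eval (b # bs)) =
      fls_subdegree (gauss e - cf_eval bs) - 2 * fls_subdegree b"
    using fls_subdegree_inverse_poly_add_diff(2)[OF b val_ge_gauss bs(2) ne] by (simp add: e)
  have "val_ge (gauss e - cf_eval bs) (2 * deg_sum bs + 1)"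
    using val_ge_inverse_poly_add_diff[OF b val_ge_gauss bs(2), of e "2 * deg_sum bs + 1"]
      Cons.prems(3)
    by (simp add: e algebra_simps)
  then obtain a where a: "poly_deg_ge 1 a"
    "- fls_subdegree a = fls_subdegree (gauss e - cf_eval bs) - 2 * deg_sum bs"
    "val_ge (gauss e - cf_eval (bs @ [a])) (2 * deg_sum (bs @ [a]) + 1)"
    using Cons.IH[OF bs(1) ne] by blast
  have "val_ge (cf_eval (bs @ [a])) 1"
    using bs(1) a(1) val_ge_cf_eval[of 1 "bs @ [a]"] by simp
  moreover have
    "2 * deg_sum (b # bs @ [a]) + 1 = (2 * deg_sum (bs @ [a]) + 1) - 2 * fls_subdegree b"
    by simp
  ultimately have "val_ge (e - cf_eval (b # bs @ [a])) (2 * deg_sum (b # bs @ [a]) + 1)"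
    using val_ge_inverse_poly_add_diff[OF b val_ge_gauss, of "cf_eval (bs @ [a])" e] a(3)
    by (simp only: e cf_eval.simps append_Cons)
  with a(1,2) sd show ?case
    by (intro exI[of _ a]) simp
qed

lemma fls_limit_exists:
  fixes c :: "nat \<Rightarrow> 'a::ab_group_add fls" and r :: "nat \<Rightarrow> int"
  assumes "\<And>n. val_ge (c n) 0" and "\<And>n n'. n \<le> n' \<Longrightarrow> val_ge (c n' - c n) (r n)"
    and "filterlim r at_top sequentially"
  shows "\<exists>L. \<forall>n. val_ge (L - c n) (r n)"
proof -
  have "\<exists>n. j < r n" for j
  proof -
    obtain n where "j + 1 \<le> r n"
      using assms(3) unfolding filterlim_at_top eventually_sequentially by blast
    then show ?thesis
      by (intro exI[of _ n]) simp
  qed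
  then obtain N where N: "\<And>j. j < r (N j)"
    by metis
  define L where "L = fps_to_fls (Abs_fps (\<lambda>i. fls_nth (c (N (int i))) (int i)))"
  have L_nth: "fls_nth L j = (if j < 0 then 0 else fls_nth (c (N j)) j)" for j
    by (simp add: L_def)
  have "fls_nth L j = fls_nth (c n) j" if "j < r n" for j n
  proof (cases "j < 0")
    case True
    then show ?thesis
      using assms(1)[of n] by (simp add: L_nth val_ge_def)
  next
    case False
    have "fls_nth (c (N j)) j = fls_nth (c n) j"
    proof (cases "N j \<le> n")
      case True
      then show ?thesis using assms(2)[OF True] N[of j] by (simp add: val_ge_def)
    next
      case False
      then show ?thesis using assms(2)[of n "N j"] that by (simp add: val_ge_def)
    qed
    with False show ?thesis
      by (simp add: L_nth)
  qed
  then show ?thesis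
    by (auto simp: val_ge_def)
qed

lemma prefix_chain_length_at_top:
  assumes "\<And>n. prefix (xs n) (xs (Suc n))" and "\<exists>\<^sub>F n in sequentially. xs (Suc n) \<noteq> xs n"
  shows "filterlim (\<lambda>n. length (xs n)) at_top sequentially"
proof -
  have mono: "length (xs n) \<le> length (xs n')" if "n \<le> n'" for n n'
    using prefix_order.lift_Suc_mono_le[of xs, OF assms(1) that] by (rule prefix_length_le)
  have "\<exists>n. L \<le> length (xs n)" for L
  proof (induction L)
    case (Suc L)
    then obtain n where "L \<le> length (xs n)"
      by blast
    moreover obtain n' where "n \<le> n'" "xs (Suc n') \<noteq> xs n'"
      using assms(2) unfolding frequently_sequentially by blast
    moreover have "length (xs n') < length (xs (Suc n'))"
      using assms(1)[of n'] \<open>xs (Suc n') \<noteq> xs n'\<close>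
      by (intro prefix_length_less) (simp add: strict_prefix_def)
    ultimately show ?case
      using mono[of n n'] by (intro exI[of _ "Suc n'"]) simp
  qed simp
  then show ?thesis
    unfolding filterlim_at_top eventually_sequentially by (meson mono le_trans)
qed

lemma cf_limit_of_prefix_chain:
  assumes "1 \<le> k" and "\<And>n. list_all (poly_deg_ge k) (xs n)" and "\<And>n. prefix (xs n) (xs (Suc n))"
    and "\<exists>\<^sub>F n in sequentially. xs (Suc n) \<noteq> xs n"
  shows "\<exists>B. gauss_orbit_ge k B \<and> (\<forall>n. val_ge (B - cf_eval (xs n)) (cyl_radius k (xs n)))"
    and "filterlim (\<lambda>n. cyl_radius k (xs n)) at_top sequentially"
proof -
  have len: "filterlim (\<lambda>n. length (xs n)) at_top sequentially"
    using assms(3,4) by (rule prefix_chain_length_at_top)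
  have rad_ge: "int (length (xs n)) \<le> cyl_radius k (xs n)" for n
    using deg_sum_ge[OF assms(2)[of n]] assms(1)
      mult_right_mono[OF assms(1), of "int (length (xs n))"]
    by (simp add: cyl_radius_def)
  then show rad: "filterlim (\<lambda>n. cyl_radius k (xs n)) at_top sequentially"
    by (intro filterlim_at_top_mono[OF filterlim_compose[OF filterlim_int_sequentially len]]
        always_eventually allI rad_ge)
  have "val_ge (cf_eval (xs n') - cf_eval (xs n)) (cyl_radius k (xs n))" if "n \<le> n'" for n n'
  proof -
    have "prefix (xs n) (xs n')"
      using prefix_order.lift_Suc_mono_le[of xs, OF assms(3) that] .
    then obtain ys where "xs n' = xs n @ ys"
      by (auto simp: prefix_def)
    then show ?thesis
      using assms(1,2) val_ge_cf_eval_append by metis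
  qed
  moreover have "val_ge (cf_eval (xs n)) 0" for n
    using val_ge_mono[OF val_ge_cf_eval[OF assms(2,1)]] assms(1) by simp
  ultimately obtain B where B: "\<And>n. val_ge (B - cf_eval (xs n)) (cyl_radius k (xs n))"
    using fls_limit_exists[of "\<lambda>n. cf_eval (xs n)", OF _ _ rad] by blast
  have "val_ge ((gauss ^^ j) B) k" for j
  proof -
    obtain n where "j \<le> length (xs n)"
      using len unfolding filterlim_at_top eventually_sequentially by blast
    then show ?thesis
      using cylinder_gauss_iterate[OF assms(2,1) B] by blast
  qed
  with B show "\<exists>B. gauss_orbit_ge k B \<and> (\<forall>n. val_ge (B - cf_eval (xs n)) (cyl_radius k (xs n)))"
    by (auto simp: gauss_orbit_ge_def)
qed

(* The bound on r + s keeps the error inside the other cylinder once the smaller one (radius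
   r = 2 deg_sum + k) is refined: the new radius r' satisfies s <= r' - k + 1 <= val (new error). *)
definition balanced :: "int \<Rightarrow> int \<Rightarrow> int \<Rightarrow> 'a::zero fls \<Rightarrow> bool" where
  "balanced c r s e \<longleftrightarrow> val_ge e (min r s) \<and> (e \<noteq> 0 \<longrightarrow> r + s \<le> 2 * fls_subdegree e + c)"

lemma balanced_commute: "balanced c r s e \<longleftrightarrow> balanced c s r e"
  by (auto simp: balanced_def min.commute add.commute)

lemma balanced_refine:
  assumes as: "list_all (poly_deg_ge k) as" and "1 \<le> k" "c \<le> k + 1"
    and "cyl_radius k as \<le> s" and "e \<noteq> cf_eval as"
    and bal: "balanced c (cyl_radius k as) s (e - cf_eval as)"
  shows "\<exists>x. poly_deg_ge k x \<and> balanced c (cyl_radius k (as @ [x])) s (e - cf_eval (as @ [x]))"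
proof -
  define v where "v = fls_subdegree (e - cf_eval as)"
  have "e - cf_eval as \<noteq> 0"
    using assms by simp
  then have v: "cyl_radius k as \<le> v" "cyl_radius k as + s \<le> 2 * v + c"
    using bal \<open>cyl_radius k as \<le> s\<close> by (auto simp: balanced_def val_ge_iff v_def)
  then have "val_ge (e - cf_eval as) (cyl_radius 1 as)"
    using \<open>1 \<le> k\<close> by (auto simp: val_ge_iff v_def cyl_radius_def)
  moreover have "list_all (poly_deg_ge 1) as"
    using as \<open>1 \<le> k\<close> by (rule list_all_poly_deg_ge_mono)
  ultimately obtain x where x: "poly_deg_ge 1 x" "- fls_subdegree x = v - 2 * deg_sum as"
    and near: "val_ge (e - cf_eval (as @ [x])) (cyl_radius 1 (as @ [x]))"
    using cylinder_next_pquot \<open>e \<noteq> cf_eval as\<close> unfolding v_def by blast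
  have "poly_deg_ge k x"
    using x v by (simp add: poly_deg_ge_def cyl_radius_def)
  moreover have "balanced c (cyl_radius k (as @ [x])) s (e - cf_eval (as @ [x]))"
    using near x v assms(2,3) by (auto simp: balanced_def val_ge_iff cyl_radius_def)
  ultimately show ?thesis
    by blast
qed

definition greedy_inv :: "int \<Rightarrow> int \<Rightarrow> 'a::field fls \<Rightarrow> 'a fls list \<Rightarrow> 'a fls list \<Rightarrow> bool" where
  "greedy_inv k m a as bs \<longleftrightarrow> list_all (poly_deg_ge k) as \<and> list_all (poly_deg_ge m) bs \<and>
     balanced (k + 1) (cyl_radius k as) (cyl_radius m bs) (a - cf_eval as - cf_eval bs)"

definition greedy_step ::
    "int \<Rightarrow> int \<Rightarrow> 'a::field fls list \<Rightarrow> 'a fls list \<Rightarrow> 'a fls list \<Rightarrow> 'a fls list \<Rightarrow> bool"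
  where
  "greedy_step k m as bs as' bs' \<longleftrightarrow>
     (if cyl_radius k as \<le> cyl_radius m bs then (\<exists>x. as' = as @ [x]) \<and> bs' = bs
      else as' = as \<and> (\<exists>x. bs' = bs @ [x]))"

lemma greedy_step_exists:
  assumes "1 \<le> k" "k \<le> m" and inv: "greedy_inv k m a as bs" and "a \<noteq> cf_eval as + cf_eval bs"
  shows "\<exists>as' bs'. greedy_inv k m a as' bs' \<and> greedy_step k m as bs as' bs'"
proof (cases "cyl_radius k as \<le> cyl_radius m bs")
  case True
  have "balanced (k + 1) (cyl_radius k as) (cyl_radius m bs) ((a - cf_eval bs) - cf_eval as)"
    using inv by (simp add: greedy_inv_def algebra_simps)
  then obtain x where "poly_deg_ge k x"
    "balanced (k + 1) (cyl_radius k (as @ [x])) (cyl_radius m bs)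
       ((a - cf_eval bs) - cf_eval (as @ [x]))"
    using balanced_refine[of k as "k + 1" "cyl_radius m bs" "a - cf_eval bs"] inv assms(1,4) True
    by (auto simp: greedy_inv_def algebra_simps)
  with inv True show ?thesis
    by (intro exI[of _ "as @ [x]"] exI[of _ bs])
      (simp add: greedy_inv_def greedy_step_def algebra_simps)
next
  case False
  have "balanced (k + 1) (cyl_radius m bs) (cyl_radius k as) ((a - cf_eval as) - cf_eval bs)"
    using inv by (simp add: greedy_inv_def balanced_commute)
  then obtain x where "poly_deg_ge m x"
    "balanced (k + 1) (cyl_radius m (bs @ [x])) (cyl_radius k as)
       ((a - cf_eval as) - cf_eval (bs @ [x]))"
    using balanced_refine[of m bs "k + 1" "cyl_radius k as" "a - cf_eval as"] inv assms(1,2,4) False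
    by (auto simp: greedy_inv_def algebra_simps)
  with inv False show ?thesis
    by (intro exI[of _ as] exI[of _ "bs @ [x]"])
      (simp add: greedy_inv_def greedy_step_def balanced_commute)
qed

lemma increasing_overtakes_constant:
  fixes f g :: "nat \<Rightarrow> int"
  assumes "\<And>n. N \<le> n \<Longrightarrow> f n < f (Suc n) \<and> g (Suc n) = g n"
  shows "\<exists>n\<ge>N. g n < f n"
proof -
  have *: "f N + int j \<le> f (N + j) \<and> g (N + j) = g N" for j
  proof (induction j)
    case (Suc j)
    with assms[of "N + j"] show ?case
      by simp
  qed simp
  define j where "j = nat (g N - f N) + 1"
  have "g N < f N + int j"
    by (simp add: j_def)
  with *[of j] show ?thesis
    by (intro exI[of _ "N + j"]) auto
qed

lemma alternating_growth_frequently: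
  fixes r s :: "nat \<Rightarrow> int"
  assumes r: "\<And>n. r n \<le> s n \<Longrightarrow> r n < r (Suc n) \<and> s (Suc n) = s n"
    and s: "\<And>n. s n < r n \<Longrightarrow> s n < s (Suc n) \<and> r (Suc n) = r n"
  shows "\<exists>\<^sub>F n in sequentially. r n \<le> s n" and "\<exists>\<^sub>F n in sequentially. s n < r n"
proof -
  show "\<exists>\<^sub>F n in sequentially. r n \<le> s n"
  proof (rule ccontr)
    assume "\<not> ?thesis"
    then obtain N where N: "\<And>n. N \<le> n \<Longrightarrow> s n < r n"
      by (auto simp: not_frequently eventually_sequentially not_le)
    then obtain n where "N \<le> n" "r n < s n"
      using increasing_overtakes_constant[of N s r] s by blast
    with N show False
      by fastforce
  qed
  show "\<exists>\<^sub>F n in sequentially. s n < r n"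
  proof (rule ccontr)
    assume "\<not> ?thesis"
    then obtain N where N: "\<And>n. N \<le> n \<Longrightarrow> r n \<le> s n"
      by (auto simp: not_frequently eventually_sequentially not_less)
    then obtain n where "N \<le> n" "s n < r n"
      using increasing_overtakes_constant[of N r s] r by blast
    with N show False
      by fastforce
  qed
qed

lemma eq_add_if_val_ge_limits:
  fixes a B C :: "'a::ab_group_add fls"
  assumes "\<And>n. val_ge (a - b n - c n) (min (r n) (s n))"
    and "\<And>n. val_ge (B - b n) (r n)" "\<And>n. val_ge (C - c n) (s n)"
    and "filterlim r at_top sequentially" "filterlim s at_top sequentially"
  shows "a = B + C"
proof -
  have "a - B - C = 0"
  proof (rule eq_0_if_val_ge_all)
    fix j
    obtain n where n: "j \<le> r n" "j \<le> s n"
      using eventually_conj[OF assms(4,5)[unfolded filterlim_at_top, THEN spec, of j]]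
      by (auto simp: eventually_sequentially)
    then have "val_ge (a - b n - c n) j"
      using assms(1)[of n] by (auto elim: val_ge_mono)
    moreover have "val_ge (B - b n) j" "val_ge (C - c n) j"
      using val_ge_mono[OF assms(2) n(1)] val_ge_mono[OF assms(3) n(2)] .
    ultimately have "val_ge ((a - b n - c n) - (B - b n) - (C - c n)) j"
      by (rule val_ge_diff[OF val_ge_diff])
    then show "val_ge (a - B - C) j"
      by (simp add: algebra_simps)
  qed
  then show ?thesis
    by (simp add: diff_diff_eq)
qed

lemma cyl_radius_snoc_less: "poly_deg_ge 1 x \<Longrightarrow> cyl_radius k as < cyl_radius k (as @ [x])"
  by (simp add: cyl_radius_def poly_deg_ge_def)

lemma greedy_step_grows:
  assumes "greedy_step k m as bs as' bs'"
    and "list_all (poly_deg_ge 1) as'" "list_all (poly_deg_ge 1) bs'"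
  shows "cyl_radius k as \<le> cyl_radius m bs \<Longrightarrow>
      cyl_radius k as < cyl_radius k as' \<and> strict_prefix as as' \<and> bs' = bs"
    and "cyl_radius m bs < cyl_radius k as \<Longrightarrow>
      cyl_radius m bs < cyl_radius m bs' \<and> strict_prefix bs bs' \<and> as' = as"
  using assms cyl_radius_snoc_less by (auto simp: greedy_step_def strict_prefix_def)

lemma greedy_chain_decomposition:
  fixes xs ys :: "nat \<Rightarrow> 'a::field fls list"
  assumes "1 \<le> k" "k \<le> m"
    and inv: "\<And>n. greedy_inv k m a (xs n) (ys n)"
    and step: "\<And>n. greedy_step k m (xs n) (ys n) (xs (Suc n)) (ys (Suc n))"
  shows "\<exists>B C. gauss_orbit_ge k B \<and> gauss_orbit_ge m C \<and> a = B + C"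
proof -
  define r where "r n = cyl_radius k (xs n)" for n
  define s where "s n = cyl_radius m (ys n)" for n
  have "1 \<le> m"
    using assms(1,2) by simp
  have xs: "list_all (poly_deg_ge k) (xs n)" and ys: "list_all (poly_deg_ge m) (ys n)" for n
    using inv by (simp_all add: greedy_inv_def)
  have grows:
    "r n \<le> s n \<Longrightarrow>
      r n < r (Suc n) \<and> s (Suc n) = s n \<and> strict_prefix (xs n) (xs (Suc n)) \<and> ys (Suc n) = ys n"
    "s n < r n \<Longrightarrow>
      s n < s (Suc n) \<and> r (Suc n) = r n \<and> strict_prefix (ys n) (ys (Suc n)) \<and> xs (Suc n) = xs n"
    for n
    using greedy_step_grows[OF step list_all_poly_deg_ge_mono[OF xs] list_all_poly_deg_ge_mono[OF ys]]
      assms(1,2)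
    unfolding r_def s_def by auto
  then have pre: "prefix (xs n) (xs (Suc n))" "prefix (ys n) (ys (Suc n))" for n
    using grows[of n] by (cases "r n \<le> s n"; auto simp: strict_prefix_def)+
  have fair: "\<exists>\<^sub>F n in sequentially. r n \<le> s n" "\<exists>\<^sub>F n in sequentially. s n < r n"
    by (rule alternating_growth_frequently; simp add: grows)+
  have xs_infinite: "\<exists>\<^sub>F n in sequentially. xs (Suc n) \<noteq> xs n"
    using fair(1) by (rule frequently_elim1) (auto dest: grows simp: strict_prefix_def)
  have ys_infinite: "\<exists>\<^sub>F n in sequentially. ys (Suc n) \<noteq> ys n"
    using fair(2) by (rule frequently_elim1) (auto dest: grows simp: strict_prefix_def)
  obtain B C where B: "gauss_orbit_ge k B" "\<And>n. val_ge (B - cf_eval (xs n)) (r n)"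
    and C: "gauss_orbit_ge m C" "\<And>n. val_ge (C - cf_eval (ys n)) (s n)"
    using cf_limit_of_prefix_chain(1)[OF assms(1) xs pre(1) xs_infinite]
      cf_limit_of_prefix_chain(1)[OF \<open>1 \<le> m\<close> ys pre(2) ys_infinite]
    unfolding r_def s_def by blast
  have "a = B + C"
  proof (rule eq_add_if_val_ge_limits)
    show "val_ge (a - cf_eval (xs n) - cf_eval (ys n)) (min (r n) (s n))" for n
      using inv[of n] by (simp add: greedy_inv_def balanced_def r_def s_def)
    show "filterlim r at_top sequentially" "filterlim s at_top sequentially"
      using cf_limit_of_prefix_chain(2)[OF assms(1) xs pre(1) xs_infinite]
        cf_limit_of_prefix_chain(2)[OF \<open>1 \<le> m\<close> ys pre(2) ys_infinite]
      unfolding r_def s_def by simp_all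
  qed (fact B(2) C(2))+
  with B(1) C(1) show ?thesis
    by blast
qed

lemma frac_decomposition:
  assumes "1 \<le> k" "k \<le> m" "val_ge a k" "a \<noteq> 0 \<Longrightarrow> m \<le> 2 * fls_subdegree a + 1"
  shows "\<exists>B C. gauss_orbit_ge k B \<and> gauss_orbit_ge m C \<and> a = B + C"
proof (cases "\<exists>as bs. greedy_inv k m a as bs \<and> a = cf_eval as + cf_eval bs")
  case True
  then obtain as bs where inv: "greedy_inv k m a as bs" and "a = cf_eval as + cf_eval bs"
    by blast
  moreover have "gauss_orbit_ge k (cf_eval as)" "gauss_orbit_ge m (cf_eval bs)"
    using inv assms(1,2) by (auto simp: greedy_inv_def intro: gauss_orbit_ge_cf_eval)
  ultimately show ?thesis
    by blast
next
  case False
  have "greedy_inv k m a [] []"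
    using assms by (auto simp: greedy_inv_def balanced_def cyl_radius_def)
  then obtain f where f: "\<And>n. greedy_inv k m a (fst (f n)) (snd (f n))"
    "\<And>n. greedy_step k m (fst (f n)) (snd (f n)) (fst (f (Suc n))) (snd (f (Suc n)))"
    using dependent_nat_choice[where P = "\<lambda>_ st. greedy_inv k m a (fst st) (snd st)"
        and Q = "\<lambda>_ st st'. greedy_step k m (fst st) (snd st) (fst st') (snd st')"]
      greedy_step_exists[OF assms(1,2)] False
    by (metis fst_conv snd_conv)
  then show ?thesis
    by (rule greedy_chain_decomposition[OF assms(1,2)])
qed

lemma cf_frac_cf_tail: "cf_frac (cf_tail f n) = (gauss ^^ n) (cf_frac f)"
  by (induction n) (simp_all add: gauss_def)

lemma degree_cf_intpart:
  assumes "f \<noteq> 0" "fls_subdegree f \<le> 0"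
  shows "degree (cf_intpart f) = nat (- fls_subdegree f)"
proof -
  have coeff: "coeff (cf_intpart f) i = fls_nth f (- int i)" for i
    by (cases i) (simp_all add: cf_intpart_def)
  show ?thesis
  proof (rule antisym)
    show "degree (cf_intpart f) \<le> nat (- fls_subdegree f)"
      by (rule degree_le) (auto simp: coeff)
    show "nat (- fls_subdegree f) \<le> degree (cf_intpart f)"
      by (rule le_degree) (use assms in \<open>simp add: coeff\<close>)
  qed
qed

lemma poly_add_in_cfS:
  fixes k :: nat
  assumes "1 \<le> k" "is_poly b" "gauss_orbit_ge (int k) x"
  shows "b + x \<in> cfS k"
  unfolding cfS_def
proof (intro CollectI allI impI)
  fix n :: nat
  assume "1 \<le> n" "cf_defined (b + x) n"
  then obtain n' where n': "n = Suc n'"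
    by (cases n) auto
  have "val_ge ((gauss ^^ 0) x) k"
    using assms(3) unfolding gauss_orbit_ge_def by blast
  then have "val_ge x 1"
    using assms(1) by (auto elim: val_ge_mono)
  then have frac: "cf_frac (b + x) = x"
    by (rule cf_frac_poly_add[OF assms(2)])
  define u where "u = (gauss ^^ n') x"
  have u0: "u \<noteq> 0"
    using \<open>cf_defined (b + x) n\<close> cf_frac_cf_tail[of "b + x" n'] n'
    unfolding cf_defined_def u_def frac by (metis lessI)
  have su: "int k \<le> fls_subdegree u"
    using assms(3) u0 by (auto simp: gauss_orbit_ge_def val_ge_iff u_def)
  have "cf_pq (b + x) n = cf_intpart (inverse u)"
    by (simp add: cf_pq_def n' u_def cf_frac_cf_tail frac)
  moreover have "degree (cf_intpart (inverse u)) = nat (fls_subdegree u)"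
    using degree_cf_intpart[of "inverse u"] u0 su assms(1) by simp
  ultimately show "k \<le> degree (cf_pq (b + x) n)"
    using su by simp
qed

theorem theorem1p2:
  fixes k m :: nat and \<alpha> :: "'a::field fls"
  assumes "1 \<le> k" and "k \<le> m"
    and "\<forall>n::int. 1 \<le> n \<and> real_of_int n < max (real k) ((real m - 1) / 2) \<longrightarrow> fls_nth \<alpha> n = 0"
  shows "\<exists>\<beta> \<gamma>. \<beta> \<in> cfS k \<and> \<gamma> \<in> cfS m \<and> \<alpha> = \<beta> + \<gamma>"
proof -
  define a where "a = cf_frac \<alpha>"
  have a_nth: "fls_nth a j = 0" if "real_of_int j < max (real k) ((real m - 1) / 2)" for j
    using assms(3) that by (simp add: a_def cf_frac_nth)
  have "val_ge a k"
    unfolding val_ge_def using a_nth by fastforce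
  moreover have "m \<le> 2 * fls_subdegree a + 1" if "a \<noteq> 0"
  proof -
    have "\<not> real_of_int (fls_subdegree a) < max (real k) ((real m - 1) / 2)"
      using a_nth[of "fls_subdegree a"] that by auto
    then have "real_of_int (int m) \<le> real_of_int (2 * fls_subdegree a + 1)"
      by (simp add: not_less)
    then show ?thesis
      by (simp only: of_int_le_iff)
  qed
  ultimately obtain B C where B: "gauss_orbit_ge k B" and C: "gauss_orbit_ge m C" and "a = B + C"
    using frac_decomposition[of k m a] assms(1,2) by auto
  then have "\<alpha> = ((\<alpha> - a) + B) + (0 + C)"
    by simp
  moreover have "(\<alpha> - a) + B \<in> cfS k"
    using poly_add_in_cfS[OF assms(1) is_poly_diff_cf_frac B] by (simp add: a_def)
  moreover have "0 + C \<in> cfS m"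
    using poly_add_in_cfS[of m 0 C] C assms(1,2) by (simp add: is_poly_def)
  ultimately show ?thesis
    by blast
qed

end
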